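(* Let $\mathbb{K}$ be a countable set, $m\ge2$ an even integer, $q=m/2$, $\mathcal{X}$ a nonempty set, and $(\phi_k)_{k\in\mathbb{K}}$ measurable functions $\phi_k\colon\mathcal{X}\to\mathbb{C}$ with $(\phi_k(x))_{k\in\mathbb{K}}\in\ell^m(\mathbb{K};\mathbb{C})$ for every $x\in\mathcal{X}$. Set $\Phi(x)=(\overline{\phi_k(x)})_{k\in\mathbb{K}}$. Then the function $$K\colon\mathcal{X}^q\times\mathcal{X}^q\to\mathbb{C},\quad K(x'_1,\dots,x'_q;x''_1,\dots,x''_q)=\sum_{k\in\mathbb{K}}\phi_k(x'_1)\cdots\phi_k(x'_q)\overline{\phi_k(x''_1)}\cdots\overline{\phi_k(x''_q)}$$ is well-defined, and: (i) for all $(x'_1,\dots,x'_q;x''_1,\dots,x''_q)\in\mathcal{X}^q\times\mathcal{X}^q$ and all permutations $\sigma',\sigma''$ of $\{1,\dots,q\}$, $K(x'_{\sigma'(1)},\dots,x'_{\sigma'(q)};x''_{\sigma''(1)},\dots,x''_{\sigma''(q)})=K(x'_1,\dots,x'_q;x''_1,\dots,x''_q)$; (ii) for all $(x';x'')\in\mathcal{X}^q\times\mathcal{X}^q$, $K(x';x'')=\overline{K(x'';x')}$; (iii) for every $(x_i)_{1\le i\le n}\in\mathcal{X}^n$ and every $u\in\mathbb{C}^n$, $\sum_{i_1,\dots,i_q=1}^n\sum_{j_1,\dots,j_q=1}^nK(x_{j_1},\dots,x_{j_q};x_{i_1},\dots,x_{i_q})u_{i_1}\cdots u_{i_q}\overline{u_{j_1}}\cdots\overline{u_{j_q}}\ge0$;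 (iv) for every $(x_i)_{1\le i\le n}\in\mathcal{X}^n$, the map $u\in\mathbb{C}^n\mapsto\big\|\sum_{i=1}^nu_i\Phi(x_i)\big\|_m^m=\sum_{i_1,\dots,i_q=1}^n\sum_{j_1,\dots,j_q=1}^nK(x_{j_1},\dots,x_{j_q};x_{i_1},\dots,x_{i_q})u_{i_1}\cdots u_{i_q}\overline{u_{j_1}}\cdots\overline{u_{j_q}}$ (the equality holding) is a positive homogeneous polynomial form of degree $m$ on $\mathbb{C}^n$; (v) for every $(x'_1,\dots,x'_q)\in\mathcal{X}^q$, $K(x'_1,\dots,x'_q;x'_1,\dots,x'_q)\ge0$; (vi) for every $(x'_1,\dots,x'_q;x''_1,\dots,x''_q)\in\mathcal{X}^q\times\mathcal{X}^q$, $$|K(x'_1,\dots,x'_q;x''_1,\dots,x''_q)|\le\prod_{s=1}^qK(x'_s,\dots,x'_s;x'_s,\dots,x'_s)^{1/m}\prod_{s=1}^qK(x''_s,\dots,x''_s;x''_s,\dots,x''_s)^{1/m}.$$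
   Context: $\ell^m(\mathbb{K};\mathbb{C})$ is the space of complex families $(w_k)_{k\in\mathbb{K}}$ with $\|w\|_m=(\sum_k|w_k|^m)^{1/m}<\infty$. In $K(z,\dots,z;z,\dots,z)$ all $2q$ arguments equal $z$. *)

theory Defs
  imports "HOL-Analysis.Analysis" "HOL-Library.Complex_Order"
begin

text \<open>The kernel K. Arguments are q-tuples represented as functions nat => 'x,
  indexed by 0..q-1 (instead of 1..q).\<close>
definition Kker :: "('k \<Rightarrow> 'x \<Rightarrow> complex) \<Rightarrow> 'k set \<Rightarrow> nat \<Rightarrow> (nat \<Rightarrow> 'x) \<Rightarrow> (nat \<Rightarrow> 'x) \<Rightarrow> complex" where
  "Kker \<phi> KK q x' x'' =
     (\<Sum>\<^sub>\<infinity>k\<in>KK. (\<Prod>s<q. \<phi> k (x' s)) * (\<Prod>s<q. cnj (\<phi> k (x'' s))))"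

text \<open>A real-valued function on C^n (vectors u :: nat => complex, only u 0..u (n-1) used)
  is a homogeneous polynomial form of degree d if it is a polynomial in u and conj u
  all of whose monomials have total degree d.\<close>
definition hom_poly_form :: "nat \<Rightarrow> nat \<Rightarrow> ((nat \<Rightarrow> complex) \<Rightarrow> real) \<Rightarrow> bool" where
  "hom_poly_form n d f \<longleftrightarrow>
     (\<exists>c :: (nat \<Rightarrow> nat) \<Rightarrow> (nat \<Rightarrow> nat) \<Rightarrow> complex. \<forall>u.
        complex_of_real (f u) =
          (\<Sum>(a, b) \<in> {(a, b). a \<in> {..<n} \<rightarrow>\<^sub>E {..d} \<and> b \<in> {..<n} \<rightarrow>\<^sub>E {..d} \<and>
                                   sum a {..<n} + sum b {..<n} = d}.
             c a b * (\<Prod>i<n. u i ^ a i * cnj (u i) ^ b i)))"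

definition pos_hom_poly_form :: "nat \<Rightarrow> nat \<Rightarrow> ((nat \<Rightarrow> complex) \<Rightarrow> real) \<Rightarrow> bool" where
  "pos_hom_poly_form n d f \<longleftrightarrow> hom_poly_form n d f \<and> (\<forall>u. f u \<ge> 0)"

end

theory Submission
  imports Defs
begin

(* Writing \<Phi>(x') for the vector k \<mapsto> \<Prod>s. \<phi> k (x' s), the kernel is the inner product
   K(x'; x'') = \<langle>\<Phi>(x'), \<Phi>(x'')\<rangle>; this gives the permutation invariance, the Hermitian
   symmetry and the nonnegativity of the diagonal. By AM-GM over the m = 2q factors,
   |\<Prod>s \<phi>_k(x'_s) \<Prod>s \<phi>_k(x''_s)| is bounded by the mean of their m-th powers, so the series
   converges absolutely; normalising each factor by its \<ell>^m norm before applying AM-GM gives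
   the generalised Hoelder inequality (vi). Expanding |v|^m = v^q (cnj v)^q for
   v = \<Sum>i u_i cnj (\<phi>_k(x_i)) over index maps {..<q} \<rightarrow> {..<n} gives (iii) and (iv), and
   grouping these maps by the multiplicities of their values exhibits the form as a
   polynomial in u and cnj u of degree m. *)

lemma summable_on_sum:
  fixes f :: "'i \<Rightarrow> 'a \<Rightarrow> 'b::topological_comm_monoid_add"
  assumes "finite I" "\<And>i. i \<in> I \<Longrightarrow> f i summable_on A"
  shows "(\<lambda>x. \<Sum>i\<in>I. f i x) summable_on A"
  using assms by (induction I rule: finite_induct) (auto intro!: summable_on_add)

lemma infsum_sum:
  fixes f :: "'i \<Rightarrow> 'a \<Rightarrow> 'b::{topological_comm_monoid_add, t2_space}"
  assumes "finite I" "\<And>i. i \<in> I \<Longrightarrow> f i summable_on A"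
  shows "(\<Sum>\<^sub>\<infinity>x\<in>A. \<Sum>i\<in>I. f i x) = (\<Sum>i\<in>I. \<Sum>\<^sub>\<infinity>x\<in>A. f i x)"
  using assms
proof (induction I rule: finite_induct)
  case (insert i I)
  then have "(\<Sum>\<^sub>\<infinity>x\<in>A. f i x + (\<Sum>i\<in>I. f i x)) = (\<Sum>\<^sub>\<infinity>x\<in>A. f i x) + (\<Sum>\<^sub>\<infinity>x\<in>A. \<Sum>i\<in>I. f i x)"
    by (intro infsum_add summable_on_sum) auto
  with insert show ?case by simp
qed simp

lemma summable_on_divide_const:
  fixes f :: "'a \<Rightarrow> 'b::{t2_space, topological_semigroup_mult, division_ring}"
  assumes "f summable_on A"
  shows "(\<lambda>x. f x / c) summable_on A"
  using summable_on_cmult_left[OF assms, of "inverse c"] by (simp add: divide_inverse)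

lemma infsum_complex_of_real:
  "(\<Sum>\<^sub>\<infinity>x\<in>A. complex_of_real (f x)) = complex_of_real (\<Sum>\<^sub>\<infinity>x\<in>A. f x)"
proof (cases "f summable_on A")
  case True
  then show ?thesis by (intro infsumI has_sum_of_real has_sum_infsum)
next
  case False
  then have "\<not> (\<lambda>x. complex_of_real (f x)) summable_on A"
    using summable_on_Re by fastforce
  with False show ?thesis by (simp add: infsum_not_exists)
qed

lemma prod_le_sum_power_div_card:
  fixes a :: "'a \<Rightarrow> real"
  assumes "finite S" "card S = d" "d > 0" "\<And>i. i \<in> S \<Longrightarrow> a i \<ge> 0"
  shows "(\<Prod>i\<in>S. a i) \<le> (\<Sum>i\<in>S. a i ^ d) / d"
proof -
  have prod_nonneg: "(\<Prod>i\<in>S. a i) \<ge> 0"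
    using assms by (simp add: prod_nonneg)
  have "(\<Prod>i\<in>S. a i) = ((\<Prod>i\<in>S. a i) ^ d) powr (1 / d)"
    using prod_nonneg assms by (simp add: powr_inverse_root real_root_power_cancel)
  also have "\<dots> = (\<Prod>i\<in>S. a i ^ d) powr (1 / card S)"
    using assms by (simp add: prod_power_distrib)
  also have "\<dots> \<le> (\<Sum>i\<in>S. a i ^ d / card S)"
    using assms by (intro arith_geom_mean) auto
  finally show ?thesis
    using assms by (simp add: sum_divide_distrib)
qed

lemma summable_on_prod_of_summable_power:
  fixes f :: "'i \<Rightarrow> 'k \<Rightarrow> real"
  assumes "finite S" "card S = d" "d > 0"
    and "\<And>s k. s \<in> S \<Longrightarrow> k \<in> K \<Longrightarrow> f s k \<ge> 0"
    and "\<And>s. s \<in> S \<Longrightarrow> (\<lambda>k. f s k ^ d) summable_on K"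
  shows "(\<lambda>k. \<Prod>s\<in>S. f s k) summable_on K"
proof (rule summable_on_comparison_test)
  show "(\<lambda>k. (\<Sum>s\<in>S. f s k ^ d) / d) summable_on K"
    using assms by (intro summable_on_divide_const summable_on_sum)
  show "(\<Prod>s\<in>S. f s k) \<le> (\<Sum>s\<in>S. f s k ^ d) / d" if "k \<in> K" for k
    using assms that by (intro prod_le_sum_power_div_card) auto
qed (use assms in \<open>auto intro: prod_nonneg\<close>)

lemma infsum_prod_le_prod_infsum_power:
  fixes f :: "'i \<Rightarrow> 'k \<Rightarrow> real"
  assumes S: "finite S" "card S = d" "d > 0"
    and nonneg: "\<And>s k. s \<in> S \<Longrightarrow> k \<in> K \<Longrightarrow> f s k \<ge> 0"
    and summable: "\<And>s. s \<in> S \<Longrightarrow> (\<lambda>k. f s k ^ d) summable_on K"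
  shows "(\<Sum>\<^sub>\<infinity>k\<in>K. \<Prod>s\<in>S. f s k) \<le> (\<Prod>s\<in>S. (\<Sum>\<^sub>\<infinity>k\<in>K. f s k ^ d) powr (1 / d))"
proof -
  define N where "N s = (\<Sum>\<^sub>\<infinity>k\<in>K. f s k ^ d)" for s
  have N_nonneg: "N s \<ge> 0" if "s \<in> S" for s
    unfolding N_def using nonneg that by (intro infsum_nonneg) simp
  show ?thesis
  proof (cases "\<exists>s\<in>S. N s = 0")
    case True
    then obtain s0 where s0: "s0 \<in> S" "N s0 = 0" by blast
    have "f s0 k ^ d = 0" if "k \<in> K" for k
      by (rule nonneg_infsum_le_0D[of "\<lambda>k. f s0 k ^ d" K])
         (use s0 summable nonneg that in \<open>auto simp: N_def\<close>)
    then have "(\<Prod>s\<in>S. f s k) = 0" if "k \<in> K" for k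
      using S s0 that by (intro prod_zero) auto
    then have "(\<Sum>\<^sub>\<infinity>k\<in>K. \<Prod>s\<in>S. f s k) = 0"
      by (simp add: infsum_0)
    then show ?thesis
      using N_nonneg by (simp add: N_def prod_nonneg)
  next
    case False
    then have N_pos: "N s > 0" if "s \<in> S" for s
      using N_nonneg[OF that] that by force
    define n where "n s = N s powr (1 / d)" for s
    have n_pos: "n s > 0" if "s \<in> S" for s
      using N_pos[OF that] by (simp add: n_def)
    have n_power: "n s ^ d = N s" if "s \<in> S" for s
      unfolding n_def using N_pos[OF that] S by (simp add: powr_inverse_root)
    \<comment> \<open>AM-GM for the normalised factors \<open>f s k / n s\<close>\<close>
    have pointwise: "(\<Prod>s\<in>S. f s k) \<le> (\<Prod>s\<in>S. n s) / d * (\<Sum>s\<in>S. f s k ^ d / N s)"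
      if k: "k \<in> K" for k
    proof -
      have "(\<Prod>s\<in>S. f s k) = (\<Prod>s\<in>S. n s) * (\<Prod>s\<in>S. f s k / n s)"
        using n_pos by (simp add: prod_dividef less_imp_neq[symmetric] prod_pos)
      also have "\<dots> \<le> (\<Prod>s\<in>S. n s) * ((\<Sum>s\<in>S. (f s k / n s) ^ d) / d)"
        using S nonneg n_pos k
        by (intro mult_left_mono prod_le_sum_power_div_card prod_nonneg)
           (auto intro: less_imp_le divide_nonneg_pos)
      also have "\<dots> = (\<Prod>s\<in>S. n s) / d * (\<Sum>s\<in>S. f s k ^ d / N s)"
        by (simp add: power_divide n_power)
      finally show ?thesis .
    qed
    have normalised_summable: "(\<lambda>k. f s k ^ d / N s) summable_on K" if "s \<in> S" for s
      using summable[OF that] by (rule summable_on_divide_const)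
    have "(\<Sum>\<^sub>\<infinity>k\<in>K. \<Prod>s\<in>S. f s k) \<le>
        (\<Sum>\<^sub>\<infinity>k\<in>K. (\<Prod>s\<in>S. n s) / d * (\<Sum>s\<in>S. f s k ^ d / N s))"
      using pointwise S nonneg summable normalised_summable
      by (intro infsum_mono summable_on_prod_of_summable_power summable_on_cmult_right summable_on_sum)
    also have "\<dots> = (\<Prod>s\<in>S. n s) / d * (\<Sum>s\<in>S. \<Sum>\<^sub>\<infinity>k\<in>K. f s k ^ d / N s)"
      using S normalised_summable by (subst infsum_cmult_right') (simp add: infsum_sum)
    also have "(\<Sum>s\<in>S. \<Sum>\<^sub>\<infinity>k\<in>K. f s k ^ d / N s) = d"
      using S N_pos
      by (simp add: divide_inverse infsum_cmult_left' less_imp_neq[symmetric] flip: N_def)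
    finally show ?thesis
      using S by (simp add: n_def N_def)
  qed
qed

lemma norm_Kker_summand:
  fixes q :: nat and \<phi> :: "'k \<Rightarrow> 'x \<Rightarrow> complex"
  shows "norm ((\<Prod>s<q. \<phi> k (x' s)) * (\<Prod>s<q. cnj (\<phi> k (x'' s)))) =
     (\<Prod>p\<in>{..<q} <+> {..<q}. case_sum (\<lambda>s. cmod (\<phi> k (x' s))) (\<lambda>s. cmod (\<phi> k (x'' s))) p)"
  by (simp add: prod.Plus comp_def norm_mult flip: prod_norm)

lemma Kker_summand_abs_summable:
  fixes \<phi> :: "'k \<Rightarrow> 'x \<Rightarrow> complex"
  assumes "q > 0" and "\<forall>x\<in>X. (\<lambda>k. cmod (\<phi> k x) ^ (2*q)) summable_on KK"
    and "\<forall>s<q. x' s \<in> X" and "\<forall>s<q. x'' s \<in> X"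
  shows "(\<lambda>k. norm ((\<Prod>s<q. \<phi> k (x' s)) * (\<Prod>s<q. cnj (\<phi> k (x'' s))))) summable_on KK"
  unfolding norm_Kker_summand
  using assms by (intro summable_on_prod_of_summable_power[where d = "2*q"])
    (auto simp: card_Plus split: sum.split)

lemma Kker_summand_summable:
  fixes \<phi> :: "'k \<Rightarrow> 'x \<Rightarrow> complex"
  assumes "q > 0" and "\<forall>x\<in>X. (\<lambda>k. cmod (\<phi> k x) ^ (2*q)) summable_on KK"
    and "\<forall>s<q. x' s \<in> X" and "\<forall>s<q. x'' s \<in> X"
  shows "(\<lambda>k. (\<Prod>s<q. \<phi> k (x' s)) * (\<Prod>s<q. cnj (\<phi> k (x'' s)))) summable_on KK"
  using Kker_summand_abs_summable[OF assms] by (rule abs_summable_summable)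

lemma Kker_permute:
  assumes "\<sigma>' permutes {..<q}" and "\<sigma>'' permutes {..<q}"
  shows "Kker \<phi> KK q (x' \<circ> \<sigma>') (x'' \<circ> \<sigma>'') = Kker \<phi> KK q x' x''"
proof -
  have "(\<Prod>s<q. \<phi> k (x' (\<sigma>' s))) = (\<Prod>s<q. \<phi> k (x' s))"
    and "(\<Prod>s<q. cnj (\<phi> k (x'' (\<sigma>'' s)))) = (\<Prod>s<q. cnj (\<phi> k (x'' s)))" for k
    using prod.permute[OF assms(1), of "\<lambda>s. \<phi> k (x' s)"]
      prod.permute[OF assms(2), of "\<lambda>s. cnj (\<phi> k (x'' s))"]
    by (simp_all add: comp_def)
  then show ?thesis
    by (simp add: Kker_def)
qed

lemma Kker_eq_cnj_Kker_swap: "Kker \<phi> KK q x' x'' = cnj (Kker \<phi> KK q x'' x')"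
  unfolding Kker_def by (simp flip: infsum_cnj add: mult.commute)

lemma Kker_const:
  "Kker \<phi> KK q (\<lambda>_. y) (\<lambda>_. y) = complex_of_real (\<Sum>\<^sub>\<infinity>k\<in>KK. cmod (\<phi> k y) ^ (2*q))"
proof -
  have summand:
    "(\<Prod>s<q. \<phi> k y) * (\<Prod>s<q. cnj (\<phi> k y)) = complex_of_real (cmod (\<phi> k y) ^ (2*q))" for k
    by (simp add: power_mult complex_norm_square[unfolded of_real_power] flip: power_mult_distrib)
  show ?thesis
    unfolding Kker_def summand by (rule infsum_complex_of_real)
qed

lemma Kker_diag_nonneg: "Kker \<phi> KK q x x \<ge> 0"
proof -
  have summand: "(\<Prod>s<q. \<phi> k (x s)) * (\<Prod>s<q. cnj (\<phi> k (x s))) =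
      complex_of_real ((cmod (\<Prod>s<q. \<phi> k (x s)))\<^sup>2)" for k
    by (simp add: complex_norm_square[unfolded of_real_power])
  have "Kker \<phi> KK q x x = complex_of_real (\<Sum>\<^sub>\<infinity>k\<in>KK. (cmod (\<Prod>s<q. \<phi> k (x s)))\<^sup>2)"
    unfolding Kker_def summand by (rule infsum_complex_of_real)
  then show ?thesis
    by (simp add: less_eq_complex_def infsum_nonneg)
qed

lemma norm_Kker_le:
  fixes \<phi> :: "'k \<Rightarrow> 'x \<Rightarrow> complex"
  assumes q: "q > 0" and summable: "\<forall>x\<in>X. (\<lambda>k. cmod (\<phi> k x) ^ (2*q)) summable_on KK"
    and x': "\<forall>s<q. x' s \<in> X" and x'': "\<forall>s<q. x'' s \<in> X"
  shows "cmod (Kker \<phi> KK q x' x'') \<le>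
    (\<Prod>s<q. (Re (Kker \<phi> KK q (\<lambda>_. x' s) (\<lambda>_. x' s))) powr (1 / real (2*q))) *
    (\<Prod>s<q. (Re (Kker \<phi> KK q (\<lambda>_. x'' s) (\<lambda>_. x'' s))) powr (1 / real (2*q)))"
    (is "_ \<le> ?rhs")
proof -
  define g where "g k = case_sum (\<lambda>s. cmod (\<phi> k (x' s))) (\<lambda>s. cmod (\<phi> k (x'' s)))" for k
  have "cmod (Kker \<phi> KK q x' x'') \<le> (\<Sum>\<^sub>\<infinity>k\<in>KK. \<Prod>p\<in>{..<q} <+> {..<q}. g k p)"
    unfolding Kker_def g_def norm_Kker_summand[symmetric]
    using Kker_summand_abs_summable[OF assms] by (rule norm_infsum_bound)
  also have "\<dots> \<le> (\<Prod>p\<in>{..<q} <+> {..<q}. (\<Sum>\<^sub>\<infinity>k\<in>KK. g k p ^ (2*q)) powr (1 / real (2*q)))"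
    using assms by (intro infsum_prod_le_prod_infsum_power) (auto simp: card_Plus g_def split: sum.split)
  also have "\<dots> = ?rhs"
    by (simp add: prod.Plus g_def Kker_const)
  finally show ?thesis .
qed

lemma power_sum_eq_sum_PiE:
  fixes w :: "nat \<Rightarrow> 'a::comm_semiring_1"
  shows "(\<Sum>i<n. w i) ^ q = (\<Sum>f\<in>{..<q} \<rightarrow>\<^sub>E {..<n}. \<Prod>s<q. w (f s))"
  using prod_sum_PiE[of "{..<q}" "\<lambda>_. {..<n}" "\<lambda>_. w"] by simp

lemma power_norm_sum_eq_double_sum:
  fixes u w :: "nat \<Rightarrow> complex"
  shows "complex_of_real (cmod (\<Sum>i<n. u i * cnj (w i)) ^ (2*q)) =
    (\<Sum>i\<in>{..<q} \<rightarrow>\<^sub>E {..<n}. \<Sum>j\<in>{..<q} \<rightarrow>\<^sub>E {..<n}.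
       (\<Prod>s<q. w (j s)) * (\<Prod>s<q. cnj (w (i s))) * (\<Prod>s<q. u (i s)) * (\<Prod>s<q. cnj (u (j s))))"
proof -
  define v where "v = (\<Sum>i<n. u i * cnj (w i))"
  have "complex_of_real (cmod v ^ (2*q)) = v ^ q * cnj v ^ q"
    by (simp add: power_mult complex_norm_square[unfolded of_real_power] flip: power_mult_distrib)
  also have "v ^ q = (\<Sum>i\<in>{..<q} \<rightarrow>\<^sub>E {..<n}. (\<Prod>s<q. u (i s)) * (\<Prod>s<q. cnj (w (i s))))"
    unfolding v_def power_sum_eq_sum_PiE by (simp only: prod.distrib)
  also have "cnj v ^ q = (\<Sum>j\<in>{..<q} \<rightarrow>\<^sub>E {..<n}. (\<Prod>s<q. cnj (u (j s))) * (\<Prod>s<q. w (j s)))"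
    unfolding v_def cnj_sum complex_cnj_mult complex_cnj_cnj power_sum_eq_sum_PiE
    by (simp only: prod.distrib)
  finally show ?thesis
    unfolding sum_product v_def by (simp add: ac_simps)
qed

lemma Kker_form_expansion:
  fixes \<phi> :: "'k \<Rightarrow> 'x \<Rightarrow> complex" and u :: "nat \<Rightarrow> complex"
  assumes q: "q > 0" and summable: "\<forall>x\<in>X. (\<lambda>k. cmod (\<phi> k x) ^ (2*q)) summable_on KK"
    and x: "\<forall>i<n. x i \<in> X"
  shows "(\<lambda>k. cmod (\<Sum>i<n. u i * cnj (\<phi> k (x i))) ^ (2*q)) summable_on KK \<and>
    complex_of_real (\<Sum>\<^sub>\<infinity>k\<in>KK. cmod (\<Sum>i<n. u i * cnj (\<phi> k (x i))) ^ (2*q)) =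
      (\<Sum>i\<in>{..<q} \<rightarrow>\<^sub>E {..<n}. \<Sum>j\<in>{..<q} \<rightarrow>\<^sub>E {..<n}.
         Kker \<phi> KK q (x \<circ> j) (x \<circ> i) * (\<Prod>s<q. u (i s)) * (\<Prod>s<q. cnj (u (j s))))"
proof -
  define A where "A = {..<q} \<rightarrow>\<^sub>E {..<n}"
  define F where "F k = cmod (\<Sum>i<n. u i * cnj (\<phi> k (x i))) ^ (2*q)" for k
  define T where "T i j k = (\<Prod>s<q. \<phi> k (x (j s))) * (\<Prod>s<q. cnj (\<phi> k (x (i s)))) *
    (\<Prod>s<q. u (i s)) * (\<Prod>s<q. cnj (u (j s)))" for i j k
  have finite_A: "finite A"
    unfolding A_def by (simp add: finite_PiE)
  have T_summable: "T i j summable_on KK" if "i \<in> A" "j \<in> A" for i j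
  proof -
    have "(\<lambda>k. (\<Prod>s<q. \<phi> k (x (j s))) * (\<Prod>s<q. cnj (\<phi> k (x (i s))))) summable_on KK"
      using that x by (intro Kker_summand_summable[OF q summable]) (auto simp: A_def)
    then show ?thesis
      unfolding T_def mult.assoc[of _ "\<Prod>s<q. u (i s)"] by (rule summable_on_cmult_left)
  qed
  have F_expansion: "complex_of_real (F k) = (\<Sum>i\<in>A. \<Sum>j\<in>A. T i j k)" for k
    unfolding F_def A_def T_def by (rule power_norm_sum_eq_double_sum)
  have "(\<lambda>k. complex_of_real (F k)) summable_on KK"
    unfolding F_expansion using finite_A T_summable by (intro summable_on_sum) auto
  then have F_summable: "F summable_on KK"
    using summable_on_Re by fastforce
  have "complex_of_real (infsum F KK) = (\<Sum>\<^sub>\<infinity>k\<in>KK. \<Sum>i\<in>A. \<Sum>j\<in>A. T i j k)"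
    unfolding infsum_complex_of_real[symmetric] F_expansion ..
  also have "\<dots> = (\<Sum>i\<in>A. \<Sum>j\<in>A. \<Sum>\<^sub>\<infinity>k\<in>KK. T i j k)"
    using finite_A T_summable by (simp add: infsum_sum summable_on_sum)
  also have "\<dots> = (\<Sum>i\<in>A. \<Sum>j\<in>A.
      Kker \<phi> KK q (x \<circ> j) (x \<circ> i) * (\<Prod>s<q. u (i s)) * (\<Prod>s<q. cnj (u (j s))))"
    by (simp add: T_def Kker_def infsum_cmult_left' comp_def)
  finally show ?thesis
    using F_summable unfolding F_def[abs_def] A_def by simp
qed

lemma Kker_form_nonneg:
  fixes \<phi> :: "'k \<Rightarrow> 'x \<Rightarrow> complex" and u :: "nat \<Rightarrow> complex"
  assumes "q > 0" and "\<forall>x\<in>X. (\<lambda>k. cmod (\<phi> k x) ^ (2*q)) summable_on KK"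
    and "\<forall>i<n. x i \<in> X"
  shows "(\<Sum>i\<in>{..<q} \<rightarrow>\<^sub>E {..<n}. \<Sum>j\<in>{..<q} \<rightarrow>\<^sub>E {..<n}.
           Kker \<phi> KK q (x \<circ> j) (x \<circ> i) * (\<Prod>s<q. u (i s)) * (\<Prod>s<q. cnj (u (j s)))) \<ge> 0"
  using Kker_form_expansion[OF assms, of u, THEN conjunct2, symmetric]
  by (simp add: less_eq_complex_def infsum_nonneg)

text \<open>The exponent vector of the monomial \<open>\<Prod>s<q. u (i s)\<close>: how often each
  \<open>l < n\<close> occurs among \<open>i 0, \<dots>, i (q - 1)\<close>.\<close>
definition index_count :: "nat \<Rightarrow> nat \<Rightarrow> (nat \<Rightarrow> nat) \<Rightarrow> nat \<Rightarrow> nat" where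
  "index_count q n i = restrict (\<lambda>l. card {s\<in>{..<q}. i s = l}) {..<n}"

lemma prod_eq_prod_power_index_count:
  fixes w :: "nat \<Rightarrow> 'a::comm_monoid_mult"
  assumes "i \<in> {..<q} \<rightarrow>\<^sub>E {..<n}"
  shows "(\<Prod>s<q. w (i s)) = (\<Prod>l<n. w l ^ index_count q n i l)"
proof -
  have "(\<Prod>s<q. w (i s)) = (\<Prod>l<n. \<Prod>s\<in>{s\<in>{..<q}. i s = l}. w (i s))"
    using assms by (intro prod.group[symmetric]) auto
  also have "\<dots> = (\<Prod>l<n. w l ^ index_count q n i l)"
    by (rule prod.cong) (auto simp: index_count_def)
  finally show ?thesis .
qed

lemma sum_index_count:
  assumes "i \<in> {..<q} \<rightarrow>\<^sub>E {..<n}"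
  shows "(\<Sum>l<n. index_count q n i l) = q"
proof -
  have "(\<Sum>l<n. index_count q n i l) = (\<Sum>l<n. \<Sum>s\<in>{s\<in>{..<q}. i s = l}. 1)"
    by (rule sum.cong) (auto simp: index_count_def)
  also have "\<dots> = (\<Sum>s<q. 1)"
    using assms by (intro sum.group) auto
  finally show ?thesis
    by simp
qed

lemma index_count_in_PiE:
  assumes "i \<in> {..<q} \<rightarrow>\<^sub>E {..<n}" and "q \<le> d"
  shows "index_count q n i \<in> {..<n} \<rightarrow>\<^sub>E {..d}"
proof -
  have "card {s\<in>{..<q}. i s = l} \<le> q" for l
    by (metis (no_types, lifting) card_lessThan card_mono finite_lessThan mem_Collect_eq subsetI)
  then show ?thesis
    using assms unfolding index_count_def by (auto intro: order_trans)
qed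

lemma hom_poly_form_of_double_sum:
  fixes f :: "(nat \<Rightarrow> complex) \<Rightarrow> real" and C :: "(nat \<Rightarrow> nat) \<Rightarrow> (nat \<Rightarrow> nat) \<Rightarrow> complex"
  assumes f: "\<And>u. complex_of_real (f u) = (\<Sum>i\<in>{..<q} \<rightarrow>\<^sub>E {..<n}. \<Sum>j\<in>{..<q} \<rightarrow>\<^sub>E {..<n}.
                 C i j * (\<Prod>s<q. u (i s)) * (\<Prod>s<q. cnj (u (j s))))"
  shows "hom_poly_form n (2*q) f"
proof -
  define A where "A = {..<q} \<rightarrow>\<^sub>E {..<n}"
  define E where "E = {(a, b). a \<in> {..<n} \<rightarrow>\<^sub>E {..2*q} \<and> b \<in> {..<n} \<rightarrow>\<^sub>E {..2*q} \<and>
                               sum a {..<n} + sum b {..<n} = 2*q}"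
  define e where "e p = (index_count q n (fst p), index_count q n (snd p))" for p
  define c where "c a b = (\<Sum>p\<in>{p \<in> A \<times> A. e p = (a, b)}. C (fst p) (snd p))" for a b
  define monomial where "monomial u ab = (\<Prod>l<n. u l ^ fst ab l * cnj (u l) ^ snd ab l)"
    for u :: "nat \<Rightarrow> complex" and ab
  have finite_E: "finite E"
    by (rule finite_subset[of _ "({..<n} \<rightarrow>\<^sub>E {..2*q}) \<times> ({..<n} \<rightarrow>\<^sub>E {..2*q})"])
       (auto simp: E_def finite_PiE)
  have e_image: "e ` (A \<times> A) \<subseteq> E"
  proof (rule image_subsetI)
    fix p assume "p \<in> A \<times> A"
    then have "fst p \<in> {..<q} \<rightarrow>\<^sub>E {..<n}" "snd p \<in> {..<q} \<rightarrow>\<^sub>E {..<n}"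
      unfolding mem_Times_iff A_def by simp_all
    then show "e p \<in> E"
      unfolding e_def E_def by (simp add: index_count_in_PiE sum_index_count)
  qed
  have monomial_e: "monomial u (e (i, j)) = (\<Prod>s<q. u (i s)) * (\<Prod>s<q. cnj (u (j s)))"
    if "i \<in> A" "j \<in> A" for u i j
  proof -
    have "(\<Prod>s<q. u (i s)) = (\<Prod>l<n. u l ^ index_count q n i l)"
      using \<open>i \<in> A\<close> unfolding A_def by (rule prod_eq_prod_power_index_count)
    moreover have "(\<Prod>s<q. cnj (u (j s))) = (\<Prod>l<n. cnj (u l) ^ index_count q n j l)"
      using \<open>j \<in> A\<close> unfolding A_def by (rule prod_eq_prod_power_index_count)
    ultimately show ?thesis
      unfolding monomial_def e_def fst_conv snd_conv by (simp only: prod.distrib)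
  qed
  have "(\<Sum>(a, b)\<in>E. c a b * monomial u (a, b)) = complex_of_real (f u)" for u
  proof -
    have "(\<Sum>(a, b)\<in>E. c a b * monomial u (a, b)) =
        (\<Sum>y\<in>E. \<Sum>p\<in>{p \<in> A \<times> A. e p = y}. C (fst p) (snd p) * monomial u (e p))"
      by (rule sum.cong) (auto simp: c_def sum_distrib_right)
    also have "\<dots> = (\<Sum>p\<in>A \<times> A. C (fst p) (snd p) * monomial u (e p))"
      using finite_E e_image by (intro sum.group) (auto simp: A_def finite_PiE)
    also have "\<dots> = (\<Sum>i\<in>A. \<Sum>j\<in>A. C i j * monomial u (e (i, j)))"
      by (simp add: sum.cartesian_product case_prod_beta')
    also have "\<dots> = (\<Sum>i\<in>A. \<Sum>j\<in>A. C i j * (\<Prod>s<q. u (i s)) * (\<Prod>s<q. cnj (u (j s))))"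
      by (intro sum.cong refl) (simp add: monomial_e mult.assoc)
    finally show ?thesis
      using f A_def by simp
  qed
  then have "\<forall>u. complex_of_real (f u) =
      (\<Sum>(a, b)\<in>E. c a b * (\<Prod>l<n. u l ^ a l * cnj (u l) ^ b l))"
    unfolding monomial_def by simp
  then show ?thesis
    unfolding hom_poly_form_def E_def by blast
qed

theorem proposition4p14:
  fixes M :: "'x measure" and KK :: "'k set" and \<phi> :: "'k \<Rightarrow> 'x \<Rightarrow> complex"
    and m q :: nat
  assumes "countable KK"
    and "even m" and "m \<ge> 2" and "q = m div 2"
    and "space M \<noteq> {}"
    and "\<forall>k\<in>KK. \<phi> k \<in> borel_measurable M"
    and "\<forall>x\<in>space M. (\<lambda>k. (cmod (\<phi> k x)) ^ m) summable_on KK"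
  shows
    "(\<forall>x' x''. (\<forall>s<q. x' s \<in> space M) \<and> (\<forall>s<q. x'' s \<in> space M) \<longrightarrow>
       (\<lambda>k. (\<Prod>s<q. \<phi> k (x' s)) * (\<Prod>s<q. cnj (\<phi> k (x'' s)))) summable_on KK)
  \<and> (\<forall>x' x'' \<sigma>' \<sigma>''. (\<forall>s<q. x' s \<in> space M) \<and> (\<forall>s<q. x'' s \<in> space M)
        \<and> \<sigma>' permutes {..<q} \<and> \<sigma>'' permutes {..<q} \<longrightarrow>
       Kker \<phi> KK q (x' \<circ> \<sigma>') (x'' \<circ> \<sigma>'') = Kker \<phi> KK q x' x'')
  \<and> (\<forall>x' x''. (\<forall>s<q. x' s \<in> space M) \<and> (\<forall>s<q. x'' s \<in> space M) \<longrightarrow>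
       Kker \<phi> KK q x' x'' = cnj (Kker \<phi> KK q x'' x'))
  \<and> (\<forall>n x (u :: nat \<Rightarrow> complex). (\<forall>i<n. x i \<in> space M) \<longrightarrow>
       (\<Sum>i\<in>{..<q} \<rightarrow>\<^sub>E {..<n}. \<Sum>j\<in>{..<q} \<rightarrow>\<^sub>E {..<n}.
          Kker \<phi> KK q (x \<circ> j) (x \<circ> i) * (\<Prod>s<q. u (i s)) * (\<Prod>s<q. cnj (u (j s)))) \<ge> 0)
  \<and> (\<forall>n x. (\<forall>i<n. x i \<in> space M) \<longrightarrow>
       (\<forall>u :: nat \<Rightarrow> complex.
          (\<lambda>k. (cmod (\<Sum>i<n. u i * cnj (\<phi> k (x i)))) ^ m) summable_on KK \<and>
          complex_of_real (\<Sum>\<^sub>\<infinity>k\<in>KK. (cmod (\<Sum>i<n. u i * cnj (\<phi> k (x i)))) ^ m) =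
          (\<Sum>i\<in>{..<q} \<rightarrow>\<^sub>E {..<n}. \<Sum>j\<in>{..<q} \<rightarrow>\<^sub>E {..<n}.
             Kker \<phi> KK q (x \<circ> j) (x \<circ> i) * (\<Prod>s<q. u (i s)) * (\<Prod>s<q. cnj (u (j s))))) \<and>
       pos_hom_poly_form n m
         (\<lambda>u. \<Sum>\<^sub>\<infinity>k\<in>KK. (cmod (\<Sum>i<n. u i * cnj (\<phi> k (x i)))) ^ m))
  \<and> (\<forall>x'. (\<forall>s<q. x' s \<in> space M) \<longrightarrow> Kker \<phi> KK q x' x' \<ge> 0)
  \<and> (\<forall>x' x''. (\<forall>s<q. x' s \<in> space M) \<and> (\<forall>s<q. x'' s \<in> space M) \<longrightarrow>
       cmod (Kker \<phi> KK q x' x'') \<le>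
         (\<Prod>s<q. (Re (Kker \<phi> KK q (\<lambda>_. x' s) (\<lambda>_. x' s))) powr (1 / real m)) *
         (\<Prod>s<q. (Re (Kker \<phi> KK q (\<lambda>_. x'' s) (\<lambda>_. x'' s))) powr (1 / real m)))"
proof -
  have q: "q > 0" and m: "m = 2*q"
    using assms(2-4) by auto
  note summable = assms(7)[unfolded m]
  note form = Kker_form_expansion[OF q summable]
  have pos_form: "pos_hom_poly_form n (2*q)
      (\<lambda>u. \<Sum>\<^sub>\<infinity>k\<in>KK. cmod (\<Sum>i<n. u i * cnj (\<phi> k (x i))) ^ (2*q))"
    if "\<forall>i<n. x i \<in> space M" for n x
    unfolding pos_hom_poly_form_def
    by (simp add: hom_poly_form_of_double_sum[OF form[OF that, THEN conjunct2]] infsum_nonneg)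
  show ?thesis
    unfolding m
    by (intro conjI allI impI; (elim conjE)?;
        rule Kker_summand_summable[OF q summable] Kker_permute Kker_eq_cnj_Kker_swap
          Kker_form_nonneg[OF q summable] form[THEN conjunct1] form[THEN conjunct2] pos_form
          Kker_diag_nonneg norm_Kker_le[OF q summable];
        assumption)
qed

end
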